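(* Let $M\subseteq B(H)$ be a finite-dimensional von Neumann algebra, $N=B(K)$, and let $V\subseteq B(H)\otimes B(K)$ be a decomposable quantum multi-relation on $(M,N)$ with components $V_1\subseteq B(\overline K,H)$ and $V_2\subseteq B(H,\overline K)$. Then the following are equivalent: (1) $V$ is symmetric, i.e. $V^*=V$; (2) $V_1=V_2^*:=\{T^*:T\in V_2\}$. Moreover, if $V$ is symmetric then $V^2\subseteq V$, i.e. $V$ is transitive.
   Context: All Hilbert spaces are finite dimensional; inner products linear in the second variable; $\theta_{\xi,\eta}(\eta')=\langle\eta,\eta'\rangle\xi$; $\overline K$ is the conjugate Hilbert space. A quantum multi-relation on $(M,N)$ is a subspace $V\subseteq B(H)\otimes N\subseteq B(H\otimes K)$ which is an $(M'\otimes1)$–$(M'\otimes1)$ bimodule with $(1\otimes Z(N))V\subseteq V$. Let $\sigma:B(\overline K,H)\otimes B(H,\overline K)\to B(H)\otimes B(K)$ be the linear isomorphism $\sigma(\theta_{\xi_1,\overline{\eta_1}}\otimes\theta_{\overline{\eta_2},\xi_2})=\theta_{\xi_1,\xi_2}\otimes\theta_{\eta_1,\eta_2}$. $V$ is decomposable if there are subspaces $V_1\subseteq B(\overline K,H)$, $V_2\subseteq B(H,\overline K)$ (its components) with $\sigma(V_1\otimes V_2)=V$. $V^*=\{T^*:T\in V\}$ and $V^2=\mathrm{span}\{ST:S,T\in V\}$. *)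

theory Defs
  imports "HOL-Analysis.Analysis"
begin

text \<open>Concrete model: H = complex^'n, K = complex^'m, with orthonormal standard bases
  e_i, f_k; the conjugate space K-bar has the orthonormal basis f_k-bar.
  Operators are matrices w.r.t. these bases: B(H) = complex^'n^'n, B(K) = complex^'m^'m,
  B(H (x) K) = complex^('n*'m)^('n*'m) (index (i,k) for e_i (x) f_k),
  B(K-bar,H) = complex^'m^'n, B(H,K-bar) = complex^'n^'m.\<close>

definition cscale :: "complex \<Rightarrow> complex^'c^'r \<Rightarrow> complex^'c^'r" where
  "cscale c A = (\<chi> i j. c * A$i$j)"

definition csubspace :: "(complex^'c^'r) set \<Rightarrow> bool" where
  "csubspace V \<longleftrightarrow> 0 \<in> V \<and> (\<forall>x\<in>V. \<forall>y\<in>V. x + y \<in> V) \<and> (\<forall>c. \<forall>x\<in>V. cscale c x \<in> V)"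

definition cspan :: "(complex^'c^'r) set \<Rightarrow> (complex^'c^'r) set" where
  "cspan S = \<Inter>{V. csubspace V \<and> S \<subseteq> V}"

definition cadj :: "complex^'c^'r \<Rightarrow> complex^'r^'c" where
  "cadj A = (\<chi> i j. cnj (A$j$i))"

definition kron :: "complex^'n^'n \<Rightarrow> complex^'m^'m \<Rightarrow> complex^('n\<times>'m)^('n\<times>'m)" where
  "kron A B = (\<chi> p q. A$(fst p)$(fst q) * B$(snd p)$(snd q))"

text \<open>The map sigma on elementary tensors: for A in B(K-bar,H), B in B(H,K-bar),
  sigma(A (x) B) has matrix entries ((i,k),(j,l)) |-> A_{ik} B_{lj}; this is
  sigma(theta_{e_i, f_k-bar} (x) theta_{f_l-bar, e_j}) = theta_{e_i,e_j} (x) theta_{f_k,f_l}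
  extended linearly.\<close>
definition sigma_el :: "complex^'m^'n \<Rightarrow> complex^'n^'m \<Rightarrow> complex^('n\<times>'m)^('n\<times>'m)" where
  "sigma_el A B = (\<chi> p q. A$(fst p)$(snd p) * B$(snd q)$(fst q))"

definition fd_vna :: "(complex^'n^'n) set \<Rightarrow> bool" where
  "fd_vna M \<longleftrightarrow> csubspace M \<and> mat 1 \<in> M \<and> (\<forall>A\<in>M. \<forall>B\<in>M. A ** B \<in> M)
     \<and> (\<forall>A\<in>M. cadj A \<in> M)"

definition commutant :: "(complex^'n^'n) set \<Rightarrow> (complex^'n^'n) set" where
  "commutant M = {T. \<forall>A\<in>M. T ** A = A ** T}"

definition center :: "(complex^'n^'n) set \<Rightarrow> (complex^'n^'n) set" where
  "center N = {Z \<in> N. \<forall>Y\<in>N. Z ** Y = Y ** Z}"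

definition quantum_multi_relation ::
  "(complex^'n^'n) set \<Rightarrow> (complex^'m^'m) set \<Rightarrow> (complex^('n\<times>'m)^('n\<times>'m)) set \<Rightarrow> bool" where
  "quantum_multi_relation M N V \<longleftrightarrow>
     csubspace V \<and> V \<subseteq> cspan {kron A B | A B. B \<in> N} \<and>
     (\<forall>T\<in>commutant M. \<forall>X\<in>V. kron T (mat 1) ** X \<in> V \<and> X ** kron T (mat 1) \<in> V) \<and>
     (\<forall>Z\<in>center N. \<forall>X\<in>V. kron (mat 1) Z ** X \<in> V)"

definition decomposable_with ::
  "(complex^('n\<times>'m)^('n\<times>'m)) set \<Rightarrow> (complex^'m^'n) set \<Rightarrow> (complex^'n^'m) set \<Rightarrow> bool" where
  "decomposable_with V V1 V2 \<longleftrightarrow> csubspace V1 \<and> csubspace V2 \<and>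
     V = cspan {sigma_el A B | A B. A \<in> V1 \<and> B \<in> V2}"

definition sq_rel :: "(complex^'c^'c) set \<Rightarrow> (complex^'c^'c) set" where
  "sq_rel V = cspan {S ** T | S T. S \<in> V \<and> T \<in> V}"

end

theory Submission
  imports Defs
begin

text \<open>The matrix of \<open>\<sigma>(A \<otimes> B)\<close> has entry \<open>A\<^sub>i\<^sub>k B\<^sub>l\<^sub>j\<close> at \<open>((i,k),(j,l))\<close>, so each of its
  columns, read as an operator from the conjugate of \<open>K\<close> to \<open>H\<close>, is a multiple of \<open>A\<close>. Hence,
  as soon as \<open>V\<^sub>2 \<noteq> 0\<close>, the component \<open>V\<^sub>1\<close> is recovered from \<open>V = \<sigma>(V\<^sub>1 \<otimes> V\<^sub>2)\<close> as the set
  of column slices of \<open>V\<close>. Taking adjoints swaps the factors, \<open>\<sigma>(A \<otimes> B)\<^sup>* = \<sigma>(B\<^sup>* \<otimes> A\<^sup>*)\<close>,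
  so \<open>V\<^sup>* = \<sigma>(V\<^sub>2\<^sup>* \<otimes> V\<^sub>1\<^sup>*)\<close>, and comparing first components gives \<open>V\<^sup>* = V \<longleftrightarrow> V\<^sub>1 = V\<^sub>2\<^sup>*\<close>.
  Transitivity holds for every decomposable \<open>V\<close>, symmetric or not, because
  \<open>\<sigma>(A \<otimes> B) \<sigma>(C \<otimes> D) = tr(B C) \<sigma>(A \<otimes> D)\<close>.\<close>

lemma csubspace_cspan: "csubspace (cspan S)"
  unfolding cspan_def csubspace_def by auto

lemma cspan_superset: "S \<subseteq> cspan S"
  unfolding cspan_def by auto

lemma cspan_base: "x \<in> S \<Longrightarrow> x \<in> cspan S"
  using cspan_superset by blast

lemma cspan_minimal: "csubspace W \<Longrightarrow> S \<subseteq> W \<Longrightarrow> cspan S \<subseteq> W"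
  unfolding cspan_def by auto

lemma csubspace_vimage:
  fixes f :: "complex^'c^'r \<Rightarrow> complex^'d^'s"
  assumes "f 0 = 0" "\<And>x y. f (x + y) = f x + f y" "\<And>c x. f (cscale c x) = cscale (g c) (f x)"
    and "csubspace W"
  shows "csubspace (f -` W)"
  using assms unfolding csubspace_def by simp

lemma cspan_image_subset:
  fixes f :: "complex^'c^'r \<Rightarrow> complex^'d^'s"
  assumes "f 0 = 0" "\<And>x y. f (x + y) = f x + f y" "\<And>c x. f (cscale c x) = cscale (g c) (f x)"
  shows "f ` cspan S \<subseteq> cspan (f ` S)"
proof -
  have "csubspace (f -` cspan (f ` S))"
    using assms csubspace_cspan by (rule csubspace_vimage)
  moreover have "S \<subseteq> f -` cspan (f ` S)"
    using cspan_superset by blast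
  ultimately have "cspan S \<subseteq> f -` cspan (f ` S)"
    by (rule cspan_minimal)
  then show ?thesis by blast
qed

lemma cadj_cadj [simp]: "cadj (cadj A) = A"
  unfolding cadj_def by (simp add: vec_eq_iff)

lemma cadj_zero: "cadj 0 = 0"
  and cadj_add: "cadj (x + y) = cadj x + cadj y"
  and cadj_cscale: "cadj (cscale c x) = cscale (cnj c) (cadj x)"
  unfolding cadj_def cscale_def by (auto simp: vec_eq_iff)

lemma cadj_image_eq_vimage: "cadj ` X = cadj -` X"
  by (force simp: image_iff)

lemma csubspace_cadj_image: "csubspace V \<Longrightarrow> csubspace (cadj ` V)"
  unfolding cadj_image_eq_vimage using cadj_zero cadj_add cadj_cscale by (rule csubspace_vimage)

lemma cadj_image_cspan: "cadj ` cspan S = cspan (cadj ` S)"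
proof
  show "cadj ` cspan S \<subseteq> cspan (cadj ` S)"
    using cadj_zero cadj_add cadj_cscale by (rule cspan_image_subset)
  have "csubspace (cadj ` cspan S)"
    using csubspace_cspan by (rule csubspace_cadj_image)
  moreover have "cadj ` S \<subseteq> cadj ` cspan S"
    using cspan_superset by blast
  ultimately show "cspan (cadj ` S) \<subseteq> cadj ` cspan S"
    by (rule cspan_minimal)
qed

lemma matrix_add_rdistrib: "(A + B) ** C = A ** C + B ** C"
  unfolding matrix_matrix_mult_def by (simp add: vec_eq_iff sum.distrib algebra_simps)

lemma matrix_mul_cscale_left: "cscale c A ** B = cscale c (A ** B)"
  and matrix_mul_cscale_right: "A ** cscale c B = cscale c (A ** B)"
  unfolding matrix_matrix_mult_def cscale_def
  by (auto simp: vec_eq_iff sum_distrib_left algebra_simps)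

lemma cspan_mult_closed:
  fixes S :: "(complex^'c^'c) set"
  assumes gens: "\<And>x y. x \<in> S \<Longrightarrow> y \<in> S \<Longrightarrow> x ** y \<in> cspan S"
    and "x \<in> cspan S" "y \<in> cspan S"
  shows "x ** y \<in> cspan S"
proof -
  have gen_left: "s ** y \<in> cspan S" if "s \<in> S" "y \<in> cspan S" for s y
  proof -
    have "csubspace ((\<lambda>y. s ** y) -` cspan S)"
      by (rule csubspace_vimage[where g = id])
        (simp_all add: matrix_add_ldistrib matrix_mul_cscale_right csubspace_cspan)
    moreover have "S \<subseteq> (\<lambda>y. s ** y) -` cspan S"
      using gens \<open>s \<in> S\<close> by blast
    ultimately have "cspan S \<subseteq> (\<lambda>y. s ** y) -` cspan S"
      by (rule cspan_minimal)
    then show ?thesis using \<open>y \<in> cspan S\<close> by blast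
  qed
  have "csubspace ((\<lambda>x. x ** y) -` cspan S)"
    by (rule csubspace_vimage[where g = id])
      (simp_all add: matrix_add_rdistrib matrix_mul_cscale_left csubspace_cspan)
  moreover have "S \<subseteq> (\<lambda>x. x ** y) -` cspan S"
    using gen_left \<open>y \<in> cspan S\<close> by blast
  ultimately have "cspan S \<subseteq> (\<lambda>x. x ** y) -` cspan S"
    by (rule cspan_minimal)
  then show ?thesis using \<open>x \<in> cspan S\<close> by blast
qed

lemma sq_rel_cspan_subset:
  fixes S :: "(complex^'c^'c) set"
  assumes "\<And>x y. x \<in> S \<Longrightarrow> y \<in> S \<Longrightarrow> x ** y \<in> cspan S"
  shows "sq_rel (cspan S) \<subseteq> cspan S"
  unfolding sq_rel_def
proof (rule cspan_minimal[OF csubspace_cspan])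
  show "{x ** y |x y. x \<in> cspan S \<and> y \<in> cspan S} \<subseteq> cspan S"
    using cspan_mult_closed[OF assms] by blast
qed

definition sigma_tensor :: "(complex^'m^'n) set \<Rightarrow> (complex^'n^'m) set \<Rightarrow> (complex^('n\<times>'m)^('n\<times>'m)) set"
  where "sigma_tensor V1 V2 = cspan {sigma_el A B | A B. A \<in> V1 \<and> B \<in> V2}"

lemma decomposable_with_iff:
  "decomposable_with V V1 V2 \<longleftrightarrow> csubspace V1 \<and> csubspace V2 \<and> V = sigma_tensor V1 V2"
  unfolding decomposable_with_def sigma_tensor_def ..

lemma cadj_sigma_el: "cadj (sigma_el A B) = sigma_el (cadj B) (cadj A)"
  unfolding cadj_def sigma_el_def by (simp add: vec_eq_iff)

lemma cadj_image_sigma_tensor: "cadj ` sigma_tensor V1 V2 = sigma_tensor (cadj ` V2) (cadj ` V1)"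
proof -
  have "cadj ` {sigma_el A B | A B. A \<in> V1 \<and> B \<in> V2}
      = {sigma_el A B | A B. A \<in> cadj ` V2 \<and> B \<in> cadj ` V1}"
  proof (intro equalityI subsetI)
    fix X assume "X \<in> cadj ` {sigma_el A B | A B. A \<in> V1 \<and> B \<in> V2}"
    then show "X \<in> {sigma_el A B | A B. A \<in> cadj ` V2 \<and> B \<in> cadj ` V1}"
      by (auto simp: cadj_sigma_el) blast
  next
    fix X assume "X \<in> {sigma_el A B | A B. A \<in> cadj ` V2 \<and> B \<in> cadj ` V1}"
    then obtain A B where "X = sigma_el (cadj B) (cadj A)" "A \<in> V1" "B \<in> V2"
      by blast
    then have "X = cadj (sigma_el A B)" "A \<in> V1" "B \<in> V2"
      by (simp_all add: cadj_sigma_el)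
    then show "X \<in> cadj ` {sigma_el A B | A B. A \<in> V1 \<and> B \<in> V2}"
      by blast
  qed
  then show ?thesis
    unfolding sigma_tensor_def cadj_image_cspan by simp
qed

lemma sigma_el_mult:
  "sigma_el A B ** sigma_el C D = cscale (trace (B ** C)) (sigma_el A D)"
proof -
  have "sigma_el A B ** sigma_el C D =
     cscale (\<Sum>r\<in>UNIV. B$(snd r)$(fst r) * C$(fst r)$(snd r)) (sigma_el A D)"
    unfolding matrix_matrix_mult_def cscale_def sigma_el_def
    by (auto simp: vec_eq_iff sum_distrib_left sum_distrib_right algebra_simps)
  also have "(\<Sum>r\<in>UNIV. B$(snd r)$(fst r) * C$(fst r)$(snd r)) = (\<Sum>j\<in>UNIV. \<Sum>l\<in>UNIV. B$l$j * C$j$l)"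
    by (simp add: sum.cartesian_product split_def)
  also have "\<dots> = trace (B ** C)"
    by (simp add: trace_def matrix_matrix_mult_def) (rule sum.swap)
  finally show ?thesis .
qed

lemma sq_rel_sigma_tensor: "sq_rel (sigma_tensor V1 V2) \<subseteq> sigma_tensor V1 V2"
  unfolding sigma_tensor_def
proof (rule sq_rel_cspan_subset)
  let ?G = "{sigma_el A B | A B. A \<in> V1 \<and> B \<in> V2}"
  fix X Y assume "X \<in> ?G" "Y \<in> ?G"
  then obtain A B C D where XY: "X = sigma_el A B" "Y = sigma_el C D" and "A \<in> V1" "D \<in> V2"
    by blast
  then have "sigma_el A D \<in> cspan ?G"
    by (blast intro: cspan_base)
  then have "cscale c (sigma_el A D) \<in> cspan ?G" for c
    using csubspace_cspan unfolding csubspace_def by blast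
  then show "X ** Y \<in> cspan ?G"
    unfolding XY sigma_el_mult by blast
qed

lemma sigma_el_zero_left [simp]: "sigma_el 0 B = 0"
  and sigma_el_zero_right [simp]: "sigma_el A 0 = 0"
  unfolding sigma_el_def by (simp_all add: vec_eq_iff)

lemma csubspace_zero: "csubspace {0}"
  unfolding csubspace_def cscale_def by (simp add: vec_eq_iff)

lemma sigma_tensor_nontrivial:
  assumes "sigma_tensor V1 V2 \<noteq> {0}"
  shows "\<exists>A\<in>V1. A \<noteq> 0" and "\<exists>B\<in>V2. B \<noteq> 0"
proof -
  have "\<not> {sigma_el A B | A B. A \<in> V1 \<and> B \<in> V2} \<subseteq> {0}"
  proof
    assume "{sigma_el A B | A B. A \<in> V1 \<and> B \<in> V2} \<subseteq> {0}"
    then have "sigma_tensor V1 V2 \<subseteq> {0}"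
      unfolding sigma_tensor_def by (rule cspan_minimal[OF csubspace_zero])
    moreover have "0 \<in> sigma_tensor V1 V2"
      using csubspace_cspan unfolding sigma_tensor_def csubspace_def by blast
    ultimately show False
      using assms by blast
  qed
  then obtain A B where "A \<in> V1" "B \<in> V2" "sigma_el A B \<noteq> 0"
    by blast
  then show "\<exists>A\<in>V1. A \<noteq> 0" and "\<exists>B\<in>V2. B \<noteq> 0"
    by (metis sigma_el_zero_left, metis sigma_el_zero_right)
qed

definition column_slice :: "'n \<Rightarrow> 'm \<Rightarrow> complex^('n\<times>'m)^('n\<times>'m) \<Rightarrow> complex^'m^'n"
  where "column_slice j l Y = (\<chi> i k. Y$(i,k)$(j,l))"

definition column_slices :: "(complex^('n\<times>'m)^('n\<times>'m)) set \<Rightarrow> (complex^'m^'n) set"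
  where "column_slices V = {column_slice j l Y | j l Y. Y \<in> V}"

lemma column_slice_sigma_el: "column_slice j l (sigma_el A B) = cscale (B$l$j) A"
  unfolding column_slice_def sigma_el_def cscale_def by (simp add: vec_eq_iff mult.commute)

lemma column_slices_sigma_tensor:
  assumes V1: "csubspace V1" and B0: "B0 \<in> V2" "B0 \<noteq> 0"
  shows "column_slices (sigma_tensor V1 V2) = V1"
proof
  show "column_slices (sigma_tensor V1 V2) \<subseteq> V1"
  proof
    fix X assume "X \<in> column_slices (sigma_tensor V1 V2)"
    then obtain j l Y where X: "X = column_slice j l Y" and Y: "Y \<in> sigma_tensor V1 V2"
      unfolding column_slices_def by blast
    have "csubspace (column_slice j l -` V1)"
      by (rule csubspace_vimage[where g = id])
        (simp_all add: V1 column_slice_def cscale_def vec_eq_iff)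
    moreover have "{sigma_el A B | A B. A \<in> V1 \<and> B \<in> V2} \<subseteq> column_slice j l -` V1"
      using V1 by (auto simp: column_slice_sigma_el csubspace_def)
    ultimately have "sigma_tensor V1 V2 \<subseteq> column_slice j l -` V1"
      unfolding sigma_tensor_def by (rule cspan_minimal)
    then show "X \<in> V1"
      using X Y by blast
  qed
  show "V1 \<subseteq> column_slices (sigma_tensor V1 V2)"
  proof
    fix A assume "A \<in> V1"
    obtain l j where nz: "B0$l$j \<noteq> 0"
      using B0(2) by (metis vec_eq_iff zero_index)
    define A' where "A' = cscale (inverse (B0$l$j)) A"
    have "A' \<in> V1"
      using V1 \<open>A \<in> V1\<close> unfolding A'_def csubspace_def by blast
    then have "sigma_el A' B0 \<in> sigma_tensor V1 V2"
      unfolding sigma_tensor_def using B0(1) by (blast intro: cspan_base)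
    moreover have "column_slice j l (sigma_el A' B0) = A"
      using nz by (simp add: column_slice_sigma_el A'_def cscale_def vec_eq_iff)
    ultimately show "A \<in> column_slices (sigma_tensor V1 V2)"
      unfolding column_slices_def by blast
  qed
qed

theorem proposition5p6:
  fixes M :: "(complex^'n::finite^'n) set"
    and V :: "(complex^('n\<times>'m::finite)^('n\<times>'m)) set"
    and V1 :: "(complex^'m^'n) set"
    and V2 :: "(complex^'n^'m) set"
  assumes "fd_vna M"
    and "quantum_multi_relation M (UNIV :: (complex^'m^'m) set) V"
    and "decomposable_with V V1 V2"
    and "V \<noteq> {0}"
  shows "(cadj ` V = V \<longleftrightarrow> V1 = cadj ` V2) \<and> (cadj ` V = V \<longrightarrow> sq_rel V \<subseteq> V)"
proof -
  have V1: "csubspace V1" and V2: "csubspace V2" and V: "V = sigma_tensor V1 V2"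
    using assms(3) unfolding decomposable_with_iff by auto
  obtain A0 where "A0 \<in> V1" "A0 \<noteq> 0"
    using sigma_tensor_nontrivial(1) assms(4) V by blast
  then have A0_adj: "cadj A0 \<in> cadj ` V1" "cadj A0 \<noteq> 0"
    by (simp, metis cadj_cadj cadj_zero)
  obtain B0 where B0: "B0 \<in> V2" "B0 \<noteq> 0"
    using sigma_tensor_nontrivial(2) assms(4) V by blast
  have slices_V: "column_slices V = V1"
    using column_slices_sigma_tensor[OF V1 B0] V by simp
  have adj_V: "cadj ` V = sigma_tensor (cadj ` V2) (cadj ` V1)"
    using V cadj_image_sigma_tensor by simp
  have slices_adj_V: "column_slices (cadj ` V) = cadj ` V2"
    using column_slices_sigma_tensor[OF csubspace_cadj_image[OF V2] A0_adj] adj_V by simp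
  have "cadj ` V = V \<longleftrightarrow> V1 = cadj ` V2"
  proof
    assume "V1 = cadj ` V2"
    then have "cadj ` V1 = V2" by (simp add: image_image)
    with \<open>V1 = cadj ` V2\<close> show "cadj ` V = V" using adj_V V by simp
  qed (use slices_V slices_adj_V in simp)
  then show ?thesis
    using sq_rel_sigma_tensor V by blast
qed

end
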